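(* Let $X$ be a topological space, for each $x\in X$ let $\mathcal B_x$ be a local base at $x$, and let $A$ be a finitely non-Hausdorff subset of $X$. Then $\bigcap_{x\in A}\bigcap\{\overline{B}:B\in\mathcal B_x\}=\bigcap_{x\in A}\bigcup\{M: M$ is a finitely non-Hausdorff subset of $X$ with $x\in M\}$, and this set also equals $\bigcap_{x\in A}\bigcup\{M: M$ is a maximal finitely non-Hausdorff subset of $X$ with $x\in M\}$.
   Context: A non-empty subset $A$ of a topological space $X$ is called finitely non-Hausdorff if for every non-empty finite subset $F\subseteq A$ and every family $\{U_y:y\in F\}$ where each $U_y$ is an open neighborhood of $y$, we have $\bigcap_{y\in F}U_y\neq\emptyset$. It is maximal finitely non-Hausdorff if no finitely non-Hausdorff subset of $X$ properly contains it. *)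

theory Defs
  imports "HOL-Analysis.Analysis"
begin

definition finitely_non_hausdorff :: "'a topology \<Rightarrow> 'a set \<Rightarrow> bool" where
  "finitely_non_hausdorff X A \<longleftrightarrow>
     A \<noteq> {} \<and> A \<subseteq> topspace X \<and>
     (\<forall>F U. finite F \<and> F \<noteq> {} \<and> F \<subseteq> A \<and>
        (\<forall>y\<in>F. openin X (U y) \<and> y \<in> U y) \<longrightarrow> (\<Inter>y\<in>F. U y) \<noteq> {})"

definition maximal_finitely_non_hausdorff :: "'a topology \<Rightarrow> 'a set \<Rightarrow> bool" where
  "maximal_finitely_non_hausdorff X A \<longleftrightarrow>
     finitely_non_hausdorff X A \<and>
     (\<forall>M. finitely_non_hausdorff X M \<and> A \<subseteq> M \<longrightarrow> M = A)"

definition local_base :: "'a topology \<Rightarrow> 'a \<Rightarrow> 'a set set \<Rightarrow> bool" where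
  "local_base X x \<B> \<longleftrightarrow>
     (\<forall>B\<in>\<B>. openin X B \<and> x \<in> B) \<and>
     (\<forall>U. openin X U \<and> x \<in> U \<longrightarrow> (\<exists>B\<in>\<B>. B \<subseteq> U))"

end

theory Submission
  imports Defs
begin

text \<open>The identity holds pointwise: for every point x, each of the three sets indexed
  by x equals the set of points z that cannot be separated from x by disjoint open sets.
  For closures of basic neighbourhoods this is the definition of closure. Finitely
  non-Hausdorff sets are closed under nonempty subsets, so some such set contains x and z
  iff the pair {x, z} is one, i.e. iff x and z are inseparable. Finally, the defining
  condition involves only finite subsets, so it passes to unions of chains, and Zorn's
  lemma extends every finitely non-Hausdorff set to a maximal one.\<close>

definition unseparated_from :: "'a topology \<Rightarrow> 'a \<Rightarrow> 'a set" where
  "unseparated_from X x =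
     {z \<in> topspace X. \<forall>U V. openin X U \<and> openin X V \<and> x \<in> U \<and> z \<in> V \<longrightarrow> U \<inter> V \<noteq> {}}"

lemma finitely_non_hausdorffI:
  assumes "A \<noteq> {}" "A \<subseteq> topspace X"
    and "\<And>F U. \<lbrakk>finite F; F \<noteq> {}; F \<subseteq> A; \<forall>y\<in>F. openin X (U y) \<and> y \<in> U y\<rbrakk>
                 \<Longrightarrow> (\<Inter>y\<in>F. U y) \<noteq> {}"
  shows "finitely_non_hausdorff X A"
  using assms unfolding finitely_non_hausdorff_def by blast

lemma finitely_non_hausdorffD:
  assumes "finitely_non_hausdorff X M" "finite F" "F \<noteq> {}" "F \<subseteq> M"
    and "\<And>y. y \<in> F \<Longrightarrow> openin X (U y) \<and> y \<in> U y"
  shows "(\<Inter>y\<in>F. U y) \<noteq> {}"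
  using assms unfolding finitely_non_hausdorff_def by blast

lemma finitely_non_hausdorff_imp_nonempty:
  "finitely_non_hausdorff X M \<Longrightarrow> M \<noteq> {}"
  unfolding finitely_non_hausdorff_def by (elim conjE)

lemma finitely_non_hausdorff_subset_topspace:
  "finitely_non_hausdorff X M \<Longrightarrow> M \<subseteq> topspace X"
  unfolding finitely_non_hausdorff_def by (elim conjE)

lemma finitely_non_hausdorff_subset:
  assumes fnh: "finitely_non_hausdorff X M" and "S \<subseteq> M" "S \<noteq> {}"
  shows "finitely_non_hausdorff X S"
proof (rule finitely_non_hausdorffI)
  show "S \<subseteq> topspace X"
    using finitely_non_hausdorff_subset_topspace[OF fnh] \<open>S \<subseteq> M\<close> by blast
next
  fix F U
  assume "finite F" "F \<noteq> {}" "F \<subseteq> S" "\<forall>y\<in>F. openin X (U y) \<and> y \<in> U y"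
  then show "(\<Inter>y\<in>F. U y) \<noteq> {}"
    using \<open>S \<subseteq> M\<close> by (intro finitely_non_hausdorffD[OF fnh]) auto
qed fact

lemma finitely_non_hausdorff_pair_iff:
  assumes "x \<in> topspace X"
  shows "finitely_non_hausdorff X {x, z} \<longleftrightarrow> z \<in> unseparated_from X x"
proof
  assume fnh: "finitely_non_hausdorff X {x, z}"
  have "U \<inter> V \<noteq> {}" if "openin X U" "openin X V" "x \<in> U" "z \<in> V" for U V
  proof -
    have "(\<Inter>y\<in>{x, z}. if y = x then U else V) \<noteq> {}"
      by (rule finitely_non_hausdorffD[OF fnh]) (use that in auto)
    then show ?thesis
      by (cases "x = z") (use that in auto)
  qed
  then show "z \<in> unseparated_from X x"
    using finitely_non_hausdorff_subset_topspace[OF fnh] unfolding unseparated_from_def by blast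
next
  assume z: "z \<in> unseparated_from X x"
  show "finitely_non_hausdorff X {x, z}"
  proof (rule finitely_non_hausdorffI)
    show "{x, z} \<subseteq> topspace X"
      using assms z unfolding unseparated_from_def by blast
  next
    fix F U
    assume F: "finite F" "F \<noteq> {}" "F \<subseteq> {x, z}" and U: "\<forall>y\<in>F. openin X (U y) \<and> y \<in> U y"
    consider "F = {x, z}" | "F = {x}" | "F = {z}"
      using F(2,3) by blast
    then show "(\<Inter>y\<in>F. U y) \<noteq> {}"
    proof cases
      case 1
      then show ?thesis
        using z U unfolding unseparated_from_def by auto
    qed (use U in auto)
  qed simp
qed

lemma local_base_Inter_closure_of:
  assumes base: "local_base X x \<B>" and x: "x \<in> topspace X"
  shows "(\<Inter>B\<in>\<B>. X closure_of B) = unseparated_from X x"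
proof (intro set_eqI iffI)
  fix z
  assume "z \<in> (\<Inter>B\<in>\<B>. X closure_of B)"
  then have z: "z \<in> X closure_of B" if "B \<in> \<B>" for B
    using that by blast
  obtain B0 where "B0 \<in> \<B>"
    using base openin_topspace[of X] x unfolding local_base_def by blast
  then have "z \<in> topspace X"
    by (rule subsetD[OF closure_of_subset_topspace z])
  moreover have "U \<inter> V \<noteq> {}"
    if U: "openin X U" "x \<in> U" and V: "openin X V" "z \<in> V" for U V
  proof -
    obtain B where "B \<in> \<B>" "B \<subseteq> U"
      using base U unfolding local_base_def by blast
    moreover obtain y where "y \<in> B" "y \<in> V"
      using z[OF \<open>B \<in> \<B>\<close>] V unfolding in_closure_of by blast
    ultimately show ?thesis
      by blast
  qed
  ultimately show "z \<in> unseparated_from X x"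
    unfolding unseparated_from_def by blast
next
  fix z
  assume z: "z \<in> unseparated_from X x"
  have "z \<in> X closure_of B" if "B \<in> \<B>" for B
  proof -
    have "openin X B" "x \<in> B"
      using base that unfolding local_base_def by blast+
    then show ?thesis
      using z unfolding unseparated_from_def in_closure_of by blast
  qed
  then show "z \<in> (\<Inter>B\<in>\<B>. X closure_of B)"
    by blast
qed

lemma Union_finitely_non_hausdorff_containing:
  assumes "x \<in> topspace X"
  shows "\<Union>{M. finitely_non_hausdorff X M \<and> x \<in> M} = unseparated_from X x"
proof (intro set_eqI iffI)
  fix z
  assume "z \<in> \<Union>{M. finitely_non_hausdorff X M \<and> x \<in> M}"
  then obtain M where "finitely_non_hausdorff X M" "x \<in> M" "z \<in> M"
    by blast
  then have "finitely_non_hausdorff X {x, z}"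
    using finitely_non_hausdorff_subset[of X M "{x, z}"] by blast
  then show "z \<in> unseparated_from X x"
    by (simp only: finitely_non_hausdorff_pair_iff[OF assms])
next
  fix z
  assume "z \<in> unseparated_from X x"
  then have "finitely_non_hausdorff X {x, z}"
    by (simp only: finitely_non_hausdorff_pair_iff[OF assms])
  then show "z \<in> \<Union>{M. finitely_non_hausdorff X M \<and> x \<in> M}"
    by blast
qed

lemma finitely_non_hausdorff_Union_chain:
  assumes "\<C> \<noteq> {}" "subset.chain {M. finitely_non_hausdorff X M} \<C>"
  shows "finitely_non_hausdorff X (\<Union>\<C>)"
proof (rule finitely_non_hausdorffI)
  have fnh: "\<And>M. M \<in> \<C> \<Longrightarrow> finitely_non_hausdorff X M"
    using assms(2) unfolding subset_chain_def by blast
  then show "\<Union>\<C> \<noteq> {}" "\<Union>\<C> \<subseteq> topspace X"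
    using assms(1) finitely_non_hausdorff_imp_nonempty finitely_non_hausdorff_subset_topspace
    by blast+
  fix F U
  assume F: "finite F" "F \<noteq> {}" "F \<subseteq> \<Union>\<C>" and U: "\<forall>y\<in>F. openin X (U y) \<and> y \<in> U y"
  obtain M where "M \<in> \<C>" "F \<subseteq> M"
    using finite_subset_Union_chain[OF F(1,3) assms] by blast
  then show "(\<Inter>y\<in>F. U y) \<noteq> {}"
    using F U by (intro finitely_non_hausdorffD[OF fnh]) auto
qed

lemma finitely_non_hausdorff_extends_to_maximal:
  assumes "finitely_non_hausdorff X S"
  obtains M where "maximal_finitely_non_hausdorff X M" "S \<subseteq> M"
proof -
  let ?\<F> = "{M. finitely_non_hausdorff X M \<and> S \<subseteq> M}"
  have "\<exists>M\<in>?\<F>. \<forall>N\<in>?\<F>. M \<subseteq> N \<longrightarrow> N = M"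
  proof (rule subset_Zorn_nonempty)
    show "?\<F> \<noteq> {}"
      using assms by blast
  next
    fix \<C> assume \<C>: "\<C> \<noteq> {}" "subset.chain ?\<F> \<C>"
    then have "\<C> \<subseteq> ?\<F>"
      unfolding subset_chain_def by (elim conjE)
    then have "subset.chain {M. finitely_non_hausdorff X M} \<C>" "S \<subseteq> \<Union>\<C>"
      using \<C> unfolding subset_chain_def by blast+
    then show "\<Union>\<C> \<in> ?\<F>"
      using finitely_non_hausdorff_Union_chain[OF \<C>(1)] by blast
  qed
  then obtain M where "M \<in> ?\<F>" and "\<forall>N\<in>?\<F>. M \<subseteq> N \<longrightarrow> N = M"
    by (elim bexE)
  then have "maximal_finitely_non_hausdorff X M"
    unfolding maximal_finitely_non_hausdorff_def by auto
  with \<open>M \<in> ?\<F>\<close> show ?thesis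
    using that by blast
qed

lemma Union_maximal_finitely_non_hausdorff_containing:
  "\<Union>{M. maximal_finitely_non_hausdorff X M \<and> x \<in> M}
     = \<Union>{M. finitely_non_hausdorff X M \<and> x \<in> M}"
proof (intro equalityI subsetI)
  fix z
  assume "z \<in> \<Union>{M. finitely_non_hausdorff X M \<and> x \<in> M}"
  then obtain M where "finitely_non_hausdorff X M" "x \<in> M" "z \<in> M"
    by blast
  moreover from this(1) obtain N where "maximal_finitely_non_hausdorff X N" "M \<subseteq> N"
    by (rule finitely_non_hausdorff_extends_to_maximal)
  ultimately show "z \<in> \<Union>{M. maximal_finitely_non_hausdorff X M \<and> x \<in> M}"
    by blast
qed (auto simp: maximal_finitely_non_hausdorff_def)

theorem corollary2p10:
  fixes X :: "'a topology" and \<B> :: "'a \<Rightarrow> 'a set set" and A :: "'a set"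
  assumes "\<And>x. x \<in> topspace X \<Longrightarrow> local_base X x (\<B> x)"
    and "finitely_non_hausdorff X A"
  shows "(\<Inter>x\<in>A. \<Inter>B\<in>\<B> x. X closure_of B)
           = (\<Inter>x\<in>A. \<Union>{M. finitely_non_hausdorff X M \<and> x \<in> M}) \<and>
         (\<Inter>x\<in>A. \<Union>{M. finitely_non_hausdorff X M \<and> x \<in> M})
           = (\<Inter>x\<in>A. \<Union>{M. maximal_finitely_non_hausdorff X M \<and> x \<in> M})"
proof
  have "x \<in> topspace X" if "x \<in> A" for x
    using that finitely_non_hausdorff_subset_topspace[OF assms(2)] by blast
  then have "(\<Inter>B\<in>\<B> x. X closure_of B) = \<Union>{M. finitely_non_hausdorff X M \<and> x \<in> M}"
    if "x \<in> A" for x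
    using that assms(1) local_base_Inter_closure_of Union_finitely_non_hausdorff_containing
    by metis
  then show "(\<Inter>x\<in>A. \<Inter>B\<in>\<B> x. X closure_of B)
      = (\<Inter>x\<in>A. \<Union>{M. finitely_non_hausdorff X M \<and> x \<in> M})"
    by (rule INF_cong[OF refl])
  show "(\<Inter>x\<in>A. \<Union>{M. finitely_non_hausdorff X M \<and> x \<in> M})
      = (\<Inter>x\<in>A. \<Union>{M. maximal_finitely_non_hausdorff X M \<and> x \<in> M})"
    by (simp only: Union_maximal_finitely_non_hausdorff_containing)
qed

end
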